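(* Let $\lambda \in \mathbb{C}\setminus\{0\}$ and $\ast \in \{p,m\}$. The two eigenvalues (counted with multiplicity) of the transfer matrix $T_\ast = T_\ast(\lambda)$ have equal modulus if and only if \[ \lambda + \lambda^{-1} \in \mathbb{R} \quad\text{and}\quad \bigl(\lambda + \lambda^{-1} - 2 p a_\ast \cosh(2\gamma)\bigr)^2 - 4|b_\ast q|^2 \le 0 . \] Consequently, $\lambda \notin \Lambda$ if and only if these two conditions hold for at least one $\ast \in \{p,m\}$.
   Context: Fix $\gamma \in \mathbb{R}$, $p \in (-1,1)$, $q \in \mathbb{C}$ with $p^2 + |q|^2 = 1$, and for $\ast \in \{p,m\}$ fix $a_\ast \in (-1,1)$, $b_\ast \in \mathbb{C}$ with $a_\ast^2 + |b_\ast|^2 = 1$ (so $q \neq 0$, $b_\ast \neq 0$). For $\lambda \in \mathbb{C}\setminus\{0\}$ and $\ast \in \{p,m\}$ define the $2\times 2$ transfer matrix \[ T_\ast = \frac{1}{b_\ast q \lambda}\begin{pmatrix} \lambda^2 - 2 a_\ast p \cosh(2\gamma)\lambda + a_\ast^2 & -\overline{b_\ast}\,(p\lambda - a_\ast e^{2\gamma}) \\ -b_\ast\,(p\lambda - a_\ast e^{-2\gamma}) & |b_\ast|^2 \end{pmatrix}. \] Define $\Lambda$ to be the set of $\lambda \in \mathbb{C}\setminus\{0\}$ such that, for each $\ast \in \{p,m\}$, the two eigenvalues of $T_\ast$ have distinct moduli. *)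

theory Defs
  imports "HOL-Analysis.Analysis"
begin

text \<open>The transfer matrix T_* for parameters gamma, p, q and (a_*, b_*) at spectral parameter lambda.
  Row/column index 1 is the first row/column, index 2 the second.\<close>
definition transfer_matrix ::
  "real \<Rightarrow> real \<Rightarrow> complex \<Rightarrow> real \<Rightarrow> complex \<Rightarrow> complex \<Rightarrow> complex^2^2" where
  "transfer_matrix \<gamma> p q a b lam =
     (\<chi> i j. (1 / (b * q * lam)) *
        (if i = 1 then
           (if j = 1 then lam^2 - 2 * of_real a * of_real p * of_real (cosh (2*\<gamma>)) * lam + of_real a ^ 2
            else - cnj b * (of_real p * lam - of_real a * of_real (exp (2*\<gamma>))))
         else
           (if j = 1 then - b * (of_real p * lam - of_real a * of_real (exp (-2*\<gamma>)))
            else of_real ((cmod b)^2))))"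

definition eigenvalues2 :: "complex^2^2 \<Rightarrow> complex \<Rightarrow> complex \<Rightarrow> bool" where
  "eigenvalues2 M \<mu>1 \<mu>2 \<longleftrightarrow> (\<forall>z. det (mat z - M) = (z - \<mu>1) * (z - \<mu>2))"

definition eig_equal_modulus :: "complex^2^2 \<Rightarrow> bool" where
  "eig_equal_modulus M \<longleftrightarrow> (\<exists>\<mu>1 \<mu>2. eigenvalues2 M \<mu>1 \<mu>2 \<and> cmod \<mu>1 = cmod \<mu>2)"

definition eig_distinct_moduli :: "complex^2^2 \<Rightarrow> bool" where
  "eig_distinct_moduli M \<longleftrightarrow> (\<exists>\<mu>1 \<mu>2. eigenvalues2 M \<mu>1 \<mu>2 \<and> cmod \<mu>1 \<noteq> cmod \<mu>2)"

definition Lambda_set ::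
  "real \<Rightarrow> real \<Rightarrow> complex \<Rightarrow> real \<Rightarrow> complex \<Rightarrow> real \<Rightarrow> complex \<Rightarrow> complex set" where
  "Lambda_set \<gamma> p q ap bp am bm =
     {lam. lam \<noteq> 0 \<and> eig_distinct_moduli (transfer_matrix \<gamma> p q ap bp lam)
                \<and> eig_distinct_moduli (transfer_matrix \<gamma> p q am bm lam)}"

definition equal_mod_cond :: "real \<Rightarrow> real \<Rightarrow> complex \<Rightarrow> real \<Rightarrow> complex \<Rightarrow> complex \<Rightarrow> bool" where
  "equal_mod_cond \<gamma> p q a b lam \<longleftrightarrow>
     lam + inverse lam \<in> \<real> \<and>
     (Re (lam + inverse lam) - 2 * p * a * cosh (2*\<gamma>))^2 - 4 * (cmod (b * q))^2 \<le> 0"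

end

theory Submission
  imports Defs
begin

text \<open>
  With w = b q, the transfer matrix has trace x / w, where x = lam + 1/lam - 2 p a cosh(2 gamma),
  and determinant cnj w / w. Hence w times the eigenvalues are two numbers with sum x and
  positive product |w|^2. Such a pair has equal moduli exactly when it is a conjugate pair,
  i.e. when x is real and the discriminant x^2 - 4 |w|^2 is nonpositive.
\<close>

lemma det_mat_minus_2:
  fixes M :: "'a::comm_ring_1^2^2"
  shows "det (mat z - M) = z^2 - trace M * z + det M"
  by (simp add: det_2 trace_def sum_2 mat_def power2_eq_square algebra_simps)

lemma eigenvalues2_iff_trace_det:
  "eigenvalues2 M \<mu>1 \<mu>2 \<longleftrightarrow> \<mu>1 + \<mu>2 = trace M \<and> \<mu>1 * \<mu>2 = det M"
proof
  assume "eigenvalues2 M \<mu>1 \<mu>2"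
  then have char: "z^2 - trace M * z + det M = (z - \<mu>1) * (z - \<mu>2)" for z
    by (simp add: eigenvalues2_def det_mat_minus_2)
  from char[of 0] have "\<mu>1 * \<mu>2 = det M" by simp
  with char[of 1] show "\<mu>1 + \<mu>2 = trace M \<and> \<mu>1 * \<mu>2 = det M"
    by (simp add: algebra_simps)
next
  assume "\<mu>1 + \<mu>2 = trace M \<and> \<mu>1 * \<mu>2 = det M"
  then have "trace M = \<mu>1 + \<mu>2" "det M = \<mu>1 * \<mu>2"
    by simp_all
  then show "eigenvalues2 M \<mu>1 \<mu>2"
    by (simp add: eigenvalues2_def det_mat_minus_2 power2_eq_square algebra_simps)
qed

lemma eigenvalues2_exists: "\<exists>\<mu>1 \<mu>2. eigenvalues2 M \<mu>1 \<mu>2"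
proof -
  define s where "s = csqrt (trace M ^ 2 - 4 * det M)"
  have "s^2 = trace M ^ 2 - 4 * det M"
    by (simp add: s_def)
  then have "eigenvalues2 M ((trace M + s) / 2) ((trace M - s) / 2)"
    by (simp add: eigenvalues2_iff_trace_det field_simps power2_eq_square)
  then show ?thesis by blast
qed

lemma eigenvalues2_unique:
  assumes "eigenvalues2 M \<mu>1 \<mu>2" "eigenvalues2 M \<nu>1 \<nu>2"
  shows "(\<nu>1 = \<mu>1 \<and> \<nu>2 = \<mu>2) \<or> (\<nu>1 = \<mu>2 \<and> \<nu>2 = \<mu>1)"
proof -
  have "(\<nu>1 - \<mu>1) * (\<nu>1 - \<mu>2) = (\<nu>1 - \<nu>1) * (\<nu>1 - \<nu>2)"
    using assms unfolding eigenvalues2_def by metis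
  moreover have "\<nu>1 + \<nu>2 = \<mu>1 + \<mu>2"
    using assms by (simp add: eigenvalues2_iff_trace_det)
  ultimately show ?thesis
    by auto
qed

lemma eig_equal_modulus_iff:
  assumes "eigenvalues2 M \<mu>1 \<mu>2"
  shows "eig_equal_modulus M \<longleftrightarrow> cmod \<mu>1 = cmod \<mu>2"
  using assms eigenvalues2_unique[OF assms] unfolding eig_equal_modulus_def by metis

lemma eig_distinct_moduli_iff_not_equal:
  "eig_distinct_moduli M \<longleftrightarrow> \<not> eig_equal_modulus M"
  using eigenvalues2_exists[of M] eig_equal_modulus_iff
  unfolding eig_distinct_moduli_def by metis

lemma Re_eq_0_if_power2_nonpos_real:
  fixes z :: complex
  assumes "z^2 = of_real c" "c \<le> 0"
  shows "Re z = 0"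
proof -
  have "Re z = 0 \<or> Im z = 0"
    using arg_cong[OF assms(1), of Im] by (auto simp: power2_eq_square)
  moreover have "(Re z)^2 - (Im z)^2 = c"
    using arg_cong[OF assms(1), of Re] by (simp add: power2_eq_square)
  moreover have "Re z = 0" if "Im z = 0"
  proof -
    have "(Re z)^2 \<le> 0"
      using that \<open>(Re z)^2 - (Im z)^2 = c\<close> assms(2) by simp
    then show ?thesis
      by simp
  qed
  ultimately show ?thesis
    by auto
qed

lemma conj_pair_iff_norm_eq:
  fixes z1 z2 :: complex
  assumes "z1 * z2 = of_real (r^2)" "r \<ge> 0"
  shows "z2 = cnj z1 \<longleftrightarrow> cmod z1 = cmod z2"
proof
  assume "cmod z1 = cmod z2"
  moreover have "cmod z1 * cmod z2 = r^2"
    using arg_cong[OF assms(1), of cmod] assms(2) by (simp add: norm_mult norm_power)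
  ultimately have "cmod z1 = r"
    using assms(2) by (simp add: power2_eq_square[symmetric])
  then have "z1 * cnj z1 = z1 * z2"
    using assms(1) by (metis complex_norm_square)
  then show "z2 = cnj z1"
    using \<open>cmod z1 = cmod z2\<close> by auto
qed simp

lemma conj_pair_iff_sum_real_bounded:
  fixes z1 z2 :: complex
  assumes prod: "z1 * z2 = of_real (r^2)" and "r \<ge> 0"
  shows "z2 = cnj z1 \<longleftrightarrow> z1 + z2 \<in> \<real> \<and> (Re (z1 + z2))^2 \<le> 4 * r^2"
proof
  assume conj: "z2 = cnj z1"
  then have "(cmod z1)^2 = r^2"
    using prod by (metis complex_norm_square of_real_eq_iff)
  then have "\<bar>Re z1\<bar> \<le> r"
    using abs_Re_le_cmod assms(2) by (metis norm_ge_zero power2_eq_iff_nonneg)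
  then have "(Re z1)^2 \<le> r^2"
    using assms(2) by (metis abs_le_square_iff abs_of_nonneg)
  then show "z1 + z2 \<in> \<real> \<and> (Re (z1 + z2))^2 \<le> 4 * r^2"
    using conj by (simp add: complex_is_Real_iff power_mult_distrib)
next
  assume "z1 + z2 \<in> \<real> \<and> (Re (z1 + z2))^2 \<le> 4 * r^2"
  then obtain x where x: "z1 + z2 = of_real x" "x^2 \<le> 4 * r^2"
    by (metis Reals_cases Re_complex_of_real)
  have disc: "(z1 - z2)^2 = of_real (x^2 - 4 * r^2)"
    using x(1) prod by (simp add: power2_eq_square algebra_simps flip: x(1))
  have "Re (z1 - z2) = 0"
    using Re_eq_0_if_power2_nonpos_real[OF disc] x(2) by simp
  with x(1) show "z2 = cnj z1"
    by (simp add: complex_eq_iff)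
qed

lemma trace_transfer_matrix:
  assumes "a^2 + (cmod b)^2 = 1" "lam \<noteq> 0"
  shows "trace (transfer_matrix \<gamma> p q a b lam)
    = (lam + inverse lam - of_real (2 * p * a * cosh (2*\<gamma>))) / (b * q)"
proof -
  define c where "c = (of_real (2 * p * a * cosh (2*\<gamma>)) :: complex)"
  have ab: "of_real a ^ 2 + of_real ((cmod b)^2) = (1::complex)"
    by (metis assms(1) of_real_1 of_real_add of_real_power)
  have "trace (transfer_matrix \<gamma> p q a b lam)
      = (lam^2 - c * lam + (of_real a ^ 2 + of_real ((cmod b)^2))) / (b * q * lam)"
    by (simp add: trace_def sum_2 transfer_matrix_def c_def add_divide_distrib diff_divide_distrib)
  also have "\<dots> = (lam^2 - c * lam + 1) / lam / (b * q)"
    unfolding ab by (simp add: mult.commute)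
  also have "(lam^2 - c * lam + 1) / lam = lam + inverse lam - c"
    using assms(2) by (simp add: field_simps power2_eq_square)
  finally show ?thesis
    by (simp add: c_def)
qed

lemma det_transfer_matrix:
  assumes "p^2 + (cmod q)^2 = 1" "lam \<noteq> 0"
  shows "det (transfer_matrix \<gamma> p q a b lam) = cnj (b * q) / (b * q)"
proof -
  define T where "T = transfer_matrix \<gamma> p q a b lam"
  define P A C E E' where "P = complex_of_real p" and "A = complex_of_real a"
    and "C = complex_of_real (cosh (2*\<gamma>))"
    and "E = complex_of_real (exp (2*\<gamma>))" and "E' = complex_of_real (exp (-2*\<gamma>))"
  define k where "k = 1 / (b * q * lam)"
  have entries:
    "T$1$1 = k * (lam^2 - 2*A*P*C*lam + A^2)" "T$2$2 = k * (cnj b * b)"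
    "T$1$2 = k * (- cnj b * (P*lam - A*E))" "T$2$1 = k * (- b * (P*lam - A*E'))"
    unfolding T_def transfer_matrix_def complex_norm_square
    by (simp_all add: P_def A_def C_def E_def E'_def k_def mult.commute)
  have "E * E' = 1"
    by (simp add: E_def E'_def flip: of_real_mult exp_add)
  moreover have "E + E' = 2 * C"
    by (simp add: E_def E'_def C_def cosh_def field_simps)
  moreover have "(P*lam - A*E) * (P*lam - A*E') = P^2 * lam^2 - A*P*lam*(E + E') + A^2 * (E * E')"
    by (simp add: algebra_simps power2_eq_square)
  ultimately have off_diag: "(P*lam - A*E) * (P*lam - A*E') = P^2 * lam^2 - 2*A*P*C*lam + A^2"
    by simp
  have "P^2 + of_real ((cmod q)^2) = 1"
    using assms(1) unfolding P_def by (metis of_real_1 of_real_add of_real_power)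
  then have P2: "P^2 = 1 - cnj q * q"
    unfolding complex_norm_square by (simp add: eq_diff_eq mult.commute)
  have "det T = k^2 * (cnj b * b) * ((lam^2 - 2*A*P*C*lam + A^2) - (P*lam - A*E) * (P*lam - A*E'))"
    by (simp add: det_2 entries power2_eq_square algebra_simps)
  also have "\<dots> = k^2 * (cnj b * b) * (cnj q * q) * lam^2"
    unfolding off_diag P2 by (simp add: algebra_simps)
  also have "\<dots> = cnj (b * q) * (b * q) / (b * q)^2"
    using assms(2) by (simp add: k_def power_mult_distrib power2_eq_square)
  also have "\<dots> = cnj (b * q) / (b * q)"
    by (cases "b * q = 0") (simp_all add: power2_eq_square)
  finally show ?thesis
    by (simp add: T_def)
qed

lemma eig_equal_modulus_iff_scaled_trace:
  fixes M :: "complex^2^2"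
  assumes "w \<noteq> 0" "det M = cnj w / w"
  shows "eig_equal_modulus M \<longleftrightarrow>
    w * trace M \<in> \<real> \<and> (Re (w * trace M))^2 \<le> 4 * (cmod w)^2"
proof -
  obtain \<mu>1 \<mu>2 where eig: "eigenvalues2 M \<mu>1 \<mu>2"
    using eigenvalues2_exists by blast
  then have sum: "w * \<mu>1 + w * \<mu>2 = w * trace M"
    by (metis eigenvalues2_iff_trace_det distrib_left)
  have "(w * \<mu>1) * (w * \<mu>2) = w * w * det M"
    using eig by (simp add: eigenvalues2_iff_trace_det ac_simps)
  also have "\<dots> = of_real ((cmod w)^2)"
    using assms by (simp add: complex_norm_square[symmetric] flip: of_real_power)
  finally have prod: "(w * \<mu>1) * (w * \<mu>2) = of_real ((cmod w)^2)" .
  have "eig_equal_modulus M \<longleftrightarrow> cmod (w * \<mu>1) = cmod (w * \<mu>2)"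
    using eig_equal_modulus_iff[OF eig] assms(1) by (simp add: norm_mult)
  also have "\<dots> \<longleftrightarrow> w * \<mu>2 = cnj (w * \<mu>1)"
    using conj_pair_iff_norm_eq[OF prod] by simp
  also have "\<dots> \<longleftrightarrow> w * trace M \<in> \<real> \<and> (Re (w * trace M))^2 \<le> 4 * (cmod w)^2"
    using conj_pair_iff_sum_real_bounded[OF prod] by (simp add: sum)
  finally show ?thesis .
qed

lemma eig_equal_modulus_transfer_matrix_iff:
  assumes "p^2 + (cmod q)^2 = 1" "a^2 + (cmod b)^2 = 1" "b \<noteq> 0" "q \<noteq> 0" "lam \<noteq> 0"
  shows "eig_equal_modulus (transfer_matrix \<gamma> p q a b lam) \<longleftrightarrow> equal_mod_cond \<gamma> p q a b lam"
proof -
  define c where "c = 2 * p * a * cosh (2*\<gamma>)"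
  have "b * q \<noteq> 0"
    using assms(3,4) by simp
  then have scaled_trace: "b * q * trace (transfer_matrix \<gamma> p q a b lam) = lam + inverse lam - of_real c"
    using trace_transfer_matrix[OF assms(2,5)] by (simp add: c_def)
  have "lam + inverse lam - of_real c \<in> \<real> \<longleftrightarrow> lam + inverse lam \<in> \<real>"
    by (metis Reals_diff Reals_add Reals_of_real diff_add_cancel)
  then show ?thesis
    unfolding eig_equal_modulus_iff_scaled_trace[OF \<open>b * q \<noteq> 0\<close> det_transfer_matrix[OF assms(1,5)]]
      scaled_trace equal_mod_cond_def
    by (simp add: c_def)
qed

lemma nonzero_if_unit_circle:
  fixes x :: real and z :: complex
  assumes "x^2 + (cmod z)^2 = 1" "-1 < x" "x < 1"
  shows "z \<noteq> 0"
  using assms by (auto simp: power2_eq_1_iff)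

theorem lemma2p1:
  fixes \<gamma> p ap am :: real and q bp bm lam :: complex
  assumes "-1 < p" "p < 1" "p^2 + (cmod q)^2 = 1"
    and "-1 < ap" "ap < 1" "ap^2 + (cmod bp)^2 = 1"
    and "-1 < am" "am < 1" "am^2 + (cmod bm)^2 = 1"
    and "lam \<noteq> 0"
  shows "(eig_equal_modulus (transfer_matrix \<gamma> p q ap bp lam) \<longleftrightarrow> equal_mod_cond \<gamma> p q ap bp lam)
       \<and> (eig_equal_modulus (transfer_matrix \<gamma> p q am bm lam) \<longleftrightarrow> equal_mod_cond \<gamma> p q am bm lam)
       \<and> (lam \<notin> Lambda_set \<gamma> p q ap bp am bm \<longleftrightarrow>
            equal_mod_cond \<gamma> p q ap bp lam \<or> equal_mod_cond \<gamma> p q am bm lam)"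
proof -
  have "q \<noteq> 0" "bp \<noteq> 0" "bm \<noteq> 0"
    using assms nonzero_if_unit_circle by blast+
  then have "eig_equal_modulus (transfer_matrix \<gamma> p q ap bp lam) \<longleftrightarrow> equal_mod_cond \<gamma> p q ap bp lam"
    and "eig_equal_modulus (transfer_matrix \<gamma> p q am bm lam) \<longleftrightarrow> equal_mod_cond \<gamma> p q am bm lam"
    using eig_equal_modulus_transfer_matrix_iff assms(3,6,9,10) by blast+
  then show ?thesis
    using assms(10) by (auto simp: Lambda_set_def eig_distinct_moduli_iff_not_equal)
qed

end
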